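(* Let $q$ be a power of the prime $p$. For every integer $c\ge2$ and every integer $k\ge0$, $$R^c_k\le p\cdot\max_{0\le j\le k}\binom{k+c-2-j}{c-2}\binom{q/p-1}{\lfloor j/p\rfloor}.$$
   Context: Binomial coefficients $\binom{x}{m}=x(x-1)\cdots(x-m+1)/m!$ for real $x$, integer $m\ge0$. $R^1_k=-(-1)^{\lfloor k/p\rfloor}\binom{q/p-1}{\lfloor k/p\rfloor}$ for integers $k\ge0$, and recursively $R^c_k=\sum_{j=0}^kR^{c-1}_j$ for $c\ge2$. *)

theory Defs
  imports Complex_Main "HOL-Computational_Algebra.Primes"
begin

definition R1 :: "nat \<Rightarrow> nat \<Rightarrow> nat \<Rightarrow> real" where
  "R1 p q k = - ((-1) ^ (k div p) * ((real q / real p - 1) gchoose (k div p)))"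

text \<open>R p q c k = R^c_k for c \<ge> 1 (value at c = 0 is an irrelevant default).\<close>
fun R :: "nat \<Rightarrow> nat \<Rightarrow> nat \<Rightarrow> nat \<Rightarrow> real" where
  "R p q 0 k = 0"
| "R p q (Suc 0) k = R1 p q k"
| "R p q (Suc (Suc c)) k = (\<Sum>j\<le>k. R p q (Suc c) j)"

end

theory Submission
  imports Defs
begin

(* Write c = d + 2 and m = q/p - 1 = p^(e-1) - 1, so that
   R^1_j = -(-1)^(j div p) * (m choose (j div p)).  Iterating the partial sums
   gives the closed form  R^c_k = sum_{j<=k} C(k-j+d, d) * R^1_j.  Splitting the
   indices j <= k by their residue r modulo p (j = t*p + r), every residue
   class contributes an alternating sum  -sum_t (-1)^t f_r(t)  with
   f_r(t) = C(k-t*p-r+d, d) * C(m, t)  (truncated to zero beyond k).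
   Both factors are nonnegative, log-concave and supported on an initial
   segment, hence so is f_r; such a sequence, once it starts decreasing, keeps
   decreasing, and an alternating sum of a sequence with this shape is bounded
   by the maximum of its terms.  Each of the p residue classes is therefore
   bounded by the maximum on the right-hand side, which gives the factor p.
   The file develops: log-concave sequences and the alternating-sum bound,
   the two concrete log-concave families, the closed form of R, the regrouping
   by residues, and finally the theorem. *)

definition log_concave_seq :: "(nat \<Rightarrow> real) \<Rightarrow> bool" where
  "log_concave_seq f \<longleftrightarrow> (\<forall>t. 0 \<le> f t) \<and> (\<forall>t. f t = 0 \<longrightarrow> f (Suc t) = 0)
     \<and> (\<forall>t. f t * f (Suc (Suc t)) \<le> f (Suc t)^2)"

lemma log_concave_seq_mult:
  assumes f: "log_concave_seq f" and g: "log_concave_seq g"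
  shows "log_concave_seq (\<lambda>t. f t * g t)"
  unfolding log_concave_seq_def
proof (intro conjI allI impI)
  fix t
  show "0 \<le> f t * g t" using f g by (simp add: log_concave_seq_def)
next
  fix t assume "f t * g t = 0"
  then show "f (Suc t) * g (Suc t) = 0" using f g by (auto simp: log_concave_seq_def)
next
  fix t
  have "f t * g t * (f (Suc (Suc t)) * g (Suc (Suc t)))
      = (f t * f (Suc (Suc t))) * (g t * g (Suc (Suc t)))" by (simp only: mult_ac)
  also have "\<dots> \<le> f (Suc t)^2 * g (Suc t)^2"
    using f g by (intro mult_mono) (auto simp: log_concave_seq_def)
  finally show "f t * g t * (f (Suc (Suc t)) * g (Suc (Suc t))) \<le> (f (Suc t) * g (Suc t))^2"
    by (simp add: power_mult_distrib)
qed

lemma log_concave_seq_decreasing_step: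
  assumes f: "log_concave_seq f" and dec: "f (Suc t) \<le> f t"
  shows "f (Suc (Suc t)) \<le> f (Suc t)"
proof (cases "f t = 0")
  case True
  then show ?thesis using f by (simp add: log_concave_seq_def)
next
  case False
  then have pos: "0 < f t" using f by (simp add: log_concave_seq_def less_le)
  have "f t * f (Suc (Suc t)) \<le> f (Suc t) * f (Suc t)"
    using f by (simp add: log_concave_seq_def power2_eq_square)
  also have "\<dots> \<le> f t * f (Suc t)"
    using dec f by (intro mult_right_mono) (auto simp: log_concave_seq_def)
  finally show ?thesis using pos by (simp add: mult_le_cancel_left_pos)
qed

lemma alternating_sum_nonincreasing:
  fixes f :: "nat \<Rightarrow> real"
  assumes "\<And>t. 0 \<le> f t" "\<And>t. f (Suc t) \<le> f t"
  shows "0 \<le> (\<Sum>t<n. (-1)^t * f t) \<and> (\<Sum>t<n. (-1)^t * f t) \<le> f 0"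
  using assms
proof (induction n arbitrary: f)
  case 0 then show ?case by simp
next
  case (Suc n)
  have IH: "0 \<le> (\<Sum>t<n. (-1)^t * f (Suc t)) \<and> (\<Sum>t<n. (-1)^t * f (Suc t)) \<le> f (Suc 0)"
    using Suc.IH[of "\<lambda>t. f (Suc t)"] Suc.prems by auto
  have "(\<Sum>t<Suc n. (-1)^t * f t) = f 0 - (\<Sum>t<n. (-1)^t * f (Suc t))"
    by (subst sum.lessThan_Suc_shift) (simp add: sum_negf)
  then show ?case using IH Suc.prems(2)[of 0] by auto
qed

text \<open>Alternating sums of a unimodal sequence with values in [0, B] lie in
  [f 0 - B, B]; the sequence first increases, peeling off leading terms,
  then decreases, where the previous lemma applies.\<close>
lemma alternating_sum_unimodal:
  fixes f :: "nat \<Rightarrow> real"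
  assumes "\<And>t. 0 \<le> f t" "\<And>t. f t \<le> B"
    and "\<And>t. f (Suc t) \<le> f t \<Longrightarrow> f (Suc (Suc t)) \<le> f (Suc t)"
  shows "f 0 - B \<le> (\<Sum>t<n. (-1)^t * f t) \<and> (\<Sum>t<n. (-1)^t * f t) \<le> B"
  using assms
proof (induction n arbitrary: f)
  case 0 then show ?case by (simp add: order_trans[of _ "f 0"])
next
  case (Suc n)
  have shift: "(\<Sum>t<Suc n. (-1)^t * f t) = f 0 - (\<Sum>t<n. (-1)^t * f (Suc t))"
    by (subst sum.lessThan_Suc_shift) (simp add: sum_negf)
  show ?case
  proof (cases "f 1 \<le> f 0")
    case True
    have "f (Suc t) \<le> f t" for t
      by (induction t) (use True Suc.prems(3) in auto)
    then show ?thesis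
      using alternating_sum_nonincreasing[of f "Suc n"] Suc.prems(1) Suc.prems(2)[of 0] by auto
  next
    case False
    have "f 1 - B \<le> (\<Sum>t<n. (-1)^t * f (Suc t)) \<and> (\<Sum>t<n. (-1)^t * f (Suc t)) \<le> B"
      using Suc.IH[of "\<lambda>t. f (Suc t)"] Suc.prems by auto
    then show ?thesis using shift False Suc.prems(2)[of 0] by auto
  qed
qed

lemma neg_alternating_sum_log_concave:
  assumes f: "log_concave_seq f" and bound: "\<And>t. f t \<le> B"
  shows "- (\<Sum>t<n. (-1)^t * f t) \<le> B"
proof -
  have "0 \<le> f 0" using f by (simp add: log_concave_seq_def)
  moreover have "f 0 - B \<le> (\<Sum>t<n. (-1)^t * f t)"
    using alternating_sum_unimodal[of f B n] f bound log_concave_seq_decreasing_step[OF f]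
    by (auto simp: log_concave_seq_def)
  ultimately show ?thesis by linarith
qed

lemma binomial_row_ratio: "Suc t * (m choose Suc t) = (m - t) * (m choose t)"
  using binomial_absorption[of t m] binomial_absorb_comp[of m t] by simp

lemma binomial_row_log_concave:
  "(m choose t) * (m choose Suc (Suc t)) \<le> (m choose Suc t)^2"
proof -
  have e1: "Suc t * (m choose Suc t) = (m - t) * (m choose t)"
    and e2: "Suc (Suc t) * (m choose Suc (Suc t)) = (m - Suc t) * (m choose Suc t)"
    by (rule binomial_row_ratio)+
  have le: "Suc t * (m - Suc t) \<le> Suc (Suc t) * (m - t)"
    by (intro mult_mono) auto
  have "(Suc t * Suc (Suc t)) * ((m choose t) * (m choose Suc (Suc t)))
      = (Suc t * (m - Suc t)) * ((m choose t) * (m choose Suc t))"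
    using e2 by (simp only: mult_ac)
  also have "\<dots> \<le> (Suc (Suc t) * (m - t)) * ((m choose t) * (m choose Suc t))"
    using le by (rule mult_right_mono) simp
  also have "\<dots> = Suc (Suc t) * (m choose Suc t) * ((m - t) * (m choose t))"
    by (simp only: mult_ac)
  also have "\<dots> = (Suc t * Suc (Suc t)) * (m choose Suc t)^2"
    unfolding e1[symmetric] power2_eq_square by (simp only: mult_ac)
  finally show ?thesis by (metis mult_le_cancel1 zero_less_Suc nat_0_less_mult_iff)
qed

lemma log_concave_seq_binomial_row: "log_concave_seq (\<lambda>t. real (m choose t))"
proof -
  have "real (m choose t) * real (m choose Suc (Suc t)) \<le> real (m choose Suc t)^2" for t
    using of_nat_mono[OF binomial_row_log_concave[of m t]] by simp
  then show ?thesis by (auto simp: log_concave_seq_def)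
qed

lemma binomial_as_product: "real ((s + d) choose d) = (\<Prod>i<d. real s + 1 + real i) / fact d"
proof -
  have "real ((s + d) choose d) = real (s + d) gchoose d" by (rule binomial_gbinomial)
  also have "\<dots> = pochhammer (real s + 1) d / fact d"
    by (simp add: gbinomial_pochhammer')
  finally show ?thesis by (simp add: pochhammer_prod atLeast0LessThan)
qed

text \<open>s \<mapsto> C(s+d, d) is log-concave along every arithmetic progression,
  since each linear factor s + 1 + i is.\<close>
lemma binomial_column_log_concave:
  "real ((s + d) choose d) * real ((s + 2*p + d) choose d) \<le> real ((s + p + d) choose d)^2"
proof -
  let ?P = "\<lambda>u. \<Prod>i<d. real u + 1 + real i"
  have "?P s * ?P (s + 2*p) = (\<Prod>i<d. (real s + 1 + real i) * (real (s + 2*p) + 1 + real i))"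
    by (simp add: prod.distrib)
  also have "\<dots> \<le> (\<Prod>i<d. (real (s + p) + 1 + real i) * (real (s + p) + 1 + real i))"
    by (intro prod_mono) (simp add: algebra_simps)
  also have "\<dots> = ?P (s + p)^2"
    by (simp add: prod.distrib power2_eq_square)
  finally have "?P s * ?P (s + 2*p) / (fact d * fact d) \<le> ?P (s + p)^2 / (fact d * fact d)"
    by (intro divide_right_mono) auto
  then show ?thesis
    by (simp add: binomial_as_product power2_eq_square)
qed

lemma log_concave_seq_weights:
  "log_concave_seq (\<lambda>t. if t*p + r \<le> k then real ((k - (t*p + r) + d) choose d) else 0)"
  (is "log_concave_seq ?a")
proof -
  have "?a t * ?a (Suc (Suc t)) \<le> (?a (Suc t))^2" for t
  proof (cases "Suc (Suc t) * p + r \<le> k")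
    case True
    define s where "s = k - (Suc (Suc t) * p + r)"
    have "k - (t * p + r) = s + 2 * p" "k - (Suc t * p + r) = s + p"
      using True unfolding s_def by (auto simp: algebra_simps)
    moreover have "k - (Suc (Suc t) * p + r) = s" by (simp add: s_def)
    ultimately show ?thesis
      using True binomial_column_log_concave[of s d p] by (simp add: mult.commute)
  qed simp
  moreover have "?a t = 0 \<Longrightarrow> ?a (Suc t) = 0" for t
    by (simp split: if_splits)
  ultimately show ?thesis by (simp add: log_concave_seq_def)
qed

lemma R_closed_form:
  "R p q (Suc (Suc d)) k = (\<Sum>j\<le>k. real ((k - j + d) choose d) * R1 p q j)"
proof (induction d arbitrary: k)
  case 0 then show ?case by simp
next
  case (Suc d)
  define S where "S d k = (\<Sum>j\<le>k. real ((k - j + d) choose d) * R1 p q j)" for d k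
  have pascal: "S (Suc d) (Suc k) = S (Suc d) k + S d (Suc k)" for k
  proof -
    have split: "real ((Suc k - j + Suc d) choose Suc d) * R1 p q j
        = real ((k - j + Suc d) choose Suc d) * R1 p q j + real ((Suc k - j + d) choose d) * R1 p q j"
      if "j \<in> {..k}" for j
    proof -
      have "Suc k - j + Suc d = Suc (k - j + Suc d)" "Suc k - j + d = k - j + Suc d"
        using that by auto
      then show ?thesis by (simp add: algebra_simps)
    qed
    have "S (Suc d) (Suc k)
        = (\<Sum>j\<le>k. real ((Suc k - j + Suc d) choose Suc d) * R1 p q j) + R1 p q (Suc k)"
      by (simp add: S_def)
    also have "\<dots> = S (Suc d) k + ((\<Sum>j\<le>k. real ((Suc k - j + d) choose d) * R1 p q j) + R1 p q (Suc k))"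
      by (simp only: sum.cong[OF refl split] sum.distrib S_def add.assoc)
    also have "\<dots> = S (Suc d) k + S d (Suc k)" by (simp add: S_def)
    finally show ?thesis .
  qed
  have "(\<Sum>i\<le>k. S d i) = S (Suc d) k" for k
    by (induction k) (simp_all add: S_def[of _ 0] pascal)
  then show ?case using Suc.IH by (simp add: S_def)
qed

lemma sum_by_residues:
  fixes f :: "nat \<Rightarrow> 'a :: comm_monoid_add"
  assumes "0 < p"
  shows "(\<Sum>j\<le>k. f j) = (\<Sum>r<p. \<Sum>t<Suc (k div p). if t*p + r \<le> k then f (t*p + r) else 0)"
proof -
  let ?n = "Suc (k div p)"
  let ?F = "\<lambda>j. if j \<le> k then f j else 0"
  have "k < ?n * p"
    using assms by (metis add_less_mono1 div_mult_mod_eq mod_less_divisor mult_Suc add.commute)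
  then have "{j \<in> {..<?n*p}. j \<le> k} = {..k}" by auto
  then have "(\<Sum>j\<le>k. f j) = (\<Sum>j<?n*p. ?F j)"
    using sum.inter_filter[of "{..<?n*p}" f "\<lambda>j. j \<le> k"] by simp
  also have "\<dots> = (\<Sum>t<?n. sum ?F {t*p..<t*p + p})" by (rule sum.nat_group[symmetric])
  also have "\<dots> = (\<Sum>t<?n. \<Sum>r<p. ?F (t*p + r))"
    by (simp add: sum.atLeastLessThan_shift_0[of ?F] atLeast0LessThan)
  also have "\<dots> = (\<Sum>r<p. \<Sum>t<?n. ?F (t*p + r))" by (rule sum.swap)
  finally show ?thesis .
qed

lemma residue_class_bound:
  assumes "0 < p" "r < p"
  shows "(\<Sum>t<n. if t*p + r \<le> k
            then real ((k - (t*p + r) + d) choose d) * - ((-1)^t * real (m choose t)) else 0)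
         \<le> Max ((\<lambda>j. real ((k - j + d) choose d) * real (m choose (j div p))) ` {0..k})"
    (is "?sum \<le> Max (?T ` _)")
proof -
  define f where "f t = (if t*p + r \<le> k then real ((k - (t*p + r) + d) choose d) else 0)
                        * real (m choose t)" for t
  have lc: "log_concave_seq f"
    unfolding f_def by (intro log_concave_seq_mult log_concave_seq_weights log_concave_seq_binomial_row)
  have bound: "f t \<le> Max (?T ` {0..k})" for t
  proof (cases "t*p + r \<le> k")
    case True
    then have "f t = ?T (t*p + r)" using assms by (simp add: f_def)
    then show ?thesis using True by (intro Max_ge) auto
  next
    case False
    have "0 \<le> ?T 0" by simp
    also have "\<dots> \<le> Max (?T ` {0..k})" by (rule Max_ge) (simp, rule imageI, simp)
    finally show ?thesis using False by (simp add: f_def)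
  qed
  have "?sum = - (\<Sum>t<n. (-1)^t * f t)"
    unfolding sum_negf[symmetric] by (intro sum.cong refl) (simp add: f_def)
  also have "\<dots> \<le> Max (?T ` {0..k})" by (rule neg_alternating_sum_log_concave[OF lc bound])
  finally show ?thesis .
qed

lemma prime_power_parameter:
  assumes "prime p" "e \<ge> 1" "q = p ^ e"
  shows "real q / real p - 1 = real (p ^ (e - 1) - 1)"
proof -
  have "0 < p" using assms(1) prime_gt_0_nat by blast
  moreover have "q = p * p ^ (e - 1)"
    using assms(2,3) by (metis Suc_diff_le diff_Suc_1 power_Suc)
  ultimately show ?thesis by (simp add: of_nat_diff)
qed

theorem lemma4p4:
  fixes p q e c k :: nat
  assumes "prime p" and "e \<ge> 1" and "q = p ^ e" and "c \<ge> 2"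
  shows "R p q c k \<le> real p * Max ((\<lambda>j. real ((k + c - 2 - j) choose (c - 2))
            * ((real q / real p - 1) gchoose (j div p))) ` {0..k})"
proof -
  obtain d where c: "c = Suc (Suc d)" using assms(4) by (metis add_2_eq_Suc le_Suc_ex)
  have p: "0 < p" using assms(1) prime_gt_0_nat by blast
  define m where "m = p ^ (e - 1) - 1"
  have gchoose_m: "(real q / real p - 1) gchoose t = real (m choose t)" for t
    using prime_power_parameter[OF assms(1-3)] by (simp add: m_def binomial_gbinomial)
  define B where "B = Max ((\<lambda>j. real ((k - j + d) choose d) * real (m choose (j div p))) ` {0..k})"
  have R1_m: "R1 p q (t*p + r) = - ((-1)^t * real (m choose t))" if "r < p" for t r
    using that p by (simp add: R1_def gchoose_m)
  have "R p q c k = (\<Sum>r<p. \<Sum>t<Suc (k div p). if t*p + r \<le> k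
            then real ((k - (t*p + r) + d) choose d) * R1 p q (t*p + r) else 0)"
    unfolding c R_closed_form by (rule sum_by_residues[OF p])
  also have "\<dots> = (\<Sum>r<p. \<Sum>t<Suc (k div p). if t*p + r \<le> k
            then real ((k - (t*p + r) + d) choose d) * - ((-1)^t * real (m choose t)) else 0)"
    by (intro sum.cong refl) (auto simp: R1_m)
  also have "\<dots> \<le> (\<Sum>r<p. B)"
    unfolding B_def by (intro sum_mono residue_class_bound[OF p]) simp
  also have "\<dots> = real p * B" by simp
  also have "B = Max ((\<lambda>j. real ((k + c - 2 - j) choose (c - 2))
            * ((real q / real p - 1) gchoose (j div p))) ` {0..k})"
    unfolding B_def c gchoose_m by (intro arg_cong[where f = Max] image_cong) auto
  finally show ?thesis .
qed

end
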